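(* Let $q\in(0,1)$, let $S$ be a Schur function (analytic in the open unit disk with $|S|\le1$ there) and let $k\in\mathbb N_0$. Then the function $z\mapsto S(z\sqrt{1-q}\,q^{k/2})$ is a contractive multiplier of $\mathbf H_{2,q}$.
   Context: $[0]_q=1$, $[k]_q=1+q+\cdots+q^{k-1}$ ($k\ge1$), $[k]_q!=\prod_{j=1}^k[j]_q$, $[0]_q!=1$. $E_q(x)=\sum_{k\ge0}x^k/[k]_q!=\prod_{j=0}^\infty(1-(1-q)q^jx)^{-1}$ for $|x|<1/(1-q)$. $\mathbf H_{2,q}$ is the reproducing kernel Hilbert space with kernel $E_q(z\overline w)$ on $|z|<1/\sqrt{1-q}$. A contractive multiplier is a function $s$ such that multiplication by $s$ is a contraction of $\mathbf H_{2,q}$ into itself. *)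

theory Defs
  imports "HOL-Analysis.Analysis"
begin

text \<open>q-numbers: [k]_q = 1 + q + ... + q^(k-1); [0]_q = 1 per the paper's convention.\<close>
definition qint :: "real \<Rightarrow> nat \<Rightarrow> real" where
  "qint q k = (if k = 0 then 1 else (\<Sum>j<k. q ^ j))"

definition qfact :: "real \<Rightarrow> nat \<Rightarrow> real" where
  "qfact q k = (\<Prod>j\<in>{1..k}. qint q j)"

definition qdisk :: "real \<Rightarrow> complex set" where
  "qdisk q = ball 0 (1 / sqrt (1 - q))"

text \<open>f belongs to H_{2,q} with Taylor coefficients a: the RKHS with kernel
  E_q(z conj w) = sum_n z^n conj(w)^n / [n]_q! consists exactly of the power series
  sum a_n z^n on qdisk q with finite norm sum_n [n]_q! |a_n|^2.\<close>
definition H2q_coeffs :: "real \<Rightarrow> (complex \<Rightarrow> complex) \<Rightarrow> (nat \<Rightarrow> complex) \<Rightarrow> bool" where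
  "H2q_coeffs q f a \<longleftrightarrow>
     summable (\<lambda>n. qfact q n * (cmod (a n))\<^sup>2) \<and>
     (\<forall>z\<in>qdisk q. (\<lambda>n. a n * z ^ n) sums f z)"

definition H2q_normsq :: "real \<Rightarrow> (nat \<Rightarrow> complex) \<Rightarrow> real" where
  "H2q_normsq q a = (\<Sum>n. qfact q n * (cmod (a n))\<^sup>2)"

definition contractive_multiplier :: "real \<Rightarrow> (complex \<Rightarrow> complex) \<Rightarrow> bool" where
  "contractive_multiplier q s \<longleftrightarrow>
     (\<forall>f a. H2q_coeffs q f a \<longrightarrow>
        (\<exists>b. H2q_coeffs q (\<lambda>z. s z * f z) b \<and> H2q_normsq q b \<le> H2q_normsq q a))"

definition schur_function :: "(complex \<Rightarrow> complex) \<Rightarrow> bool" where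
  "schur_function S \<longleftrightarrow> S holomorphic_on ball 0 1 \<and> (\<forall>z\<in>ball 0 1. cmod (S z) \<le> 1)"

end

(*
  Put t = sqrt (1 - q) and rescale the Taylor coefficients, a_n = alpha_n t^n. The H_{2,q} norm
  becomes sum_n w_n |alpha_n|^2 with the decreasing weights w_n = [n]_q! (1-q)^n = prod_{1<=j<=n} (1-q^j),
  and multiplication by S(z t q^(k/2)) acts on alpha as the lower triangular Toeplitz matrix of the
  Schur function T(u) = S(q^(k/2) u). Multiplication by a Schur function contracts the Hardy space H^2,
  and by triangularity it contracts every initial segment of alpha; Abel summation against the
  decreasing weights turns these partial-sum inequalities into the weighted one.
  The Hardy space estimate avoids integration: on a circle of radius r < 1, sampling at roots of
  unity gives a discrete Parseval identity for truncated products, then the truncation degree goes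
  to infinity and r to 1.
*)
theory Submission
  imports Defs "HOL-Complex_Analysis.Cauchy_Integral_Formula"
begin

section \<open>Cauchy products of power series\<close>

definition cauchy_product :: "(nat \<Rightarrow> 'a::semiring_0) \<Rightarrow> (nat \<Rightarrow> 'a) \<Rightarrow> nat \<Rightarrow> 'a" where
  "cauchy_product c d n = (\<Sum>j\<le>n. c j * d (n - j))"

lemma cauchy_product_powers:
  fixes c d :: "nat \<Rightarrow> 'a::comm_semiring_1"
  shows "cauchy_product (\<lambda>j. c j * x ^ j) (\<lambda>j. d j * x ^ j) n = cauchy_product c d n * x ^ n"
  unfolding cauchy_product_def sum_distrib_right
proof (intro sum.cong refl)
  fix j assume "j \<in> {..n}"
  then have "x ^ j * x ^ (n - j) = x ^ n"
    by (simp flip: power_add)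
  then show "c j * x ^ j * (d (n - j) * x ^ (n - j)) = c j * d (n - j) * x ^ n"
    by (metis mult.assoc mult.left_commute)
qed

lemma summable_norm_cauchy_product:
  fixes c d :: "nat \<Rightarrow> 'a::{real_normed_algebra,banach}"
  assumes "summable (\<lambda>n. norm (c n))" "summable (\<lambda>n. norm (d n))"
  shows "summable (\<lambda>n. norm (cauchy_product c d n))"
proof (rule summable_comparison_test)
  show "summable (cauchy_product (\<lambda>n. norm (c n)) (\<lambda>n. norm (d n)))"
    unfolding cauchy_product_def using assms by (intro summable_Cauchy_product) auto
  show "\<exists>N. \<forall>n\<ge>N. norm (norm (cauchy_product c d n))
                   \<le> cauchy_product (\<lambda>n. norm (c n)) (\<lambda>n. norm (d n)) n"
    unfolding cauchy_product_def
    by (auto intro!: order_trans[OF norm_sum] sum_mono norm_mult_ineq)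
qed

lemma powser_abs_summable_inside:
  fixes c :: "nat \<Rightarrow> complex"
  assumes sums: "\<And>z. norm z < R \<Longrightarrow> (\<lambda>n. c n * z ^ n) sums f z" and z: "norm z < R"
  shows "summable (\<lambda>n. norm (c n * z ^ n))"
proof (rule powser_insidea)
  define w where "w = complex_of_real ((norm z + R) / 2)"
  have "0 \<le> norm z + R"
    using z norm_ge_zero[of z] by linarith
  then have norm_w: "norm w = (norm z + R) / 2"
    by (simp only: w_def norm_of_real) simp
  show "summable (\<lambda>n. c n * w ^ n)"
    using sums[of w] z norm_w by (auto intro: sums_summable)
  show "norm z < norm w"
    using z norm_w by simp
qed

lemma powser_mult_sums:
  fixes c d :: "nat \<Rightarrow> complex"
  assumes c: "\<And>z. norm z < R \<Longrightarrow> (\<lambda>n. c n * z ^ n) sums f z"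
      and d: "\<And>z. norm z < R \<Longrightarrow> (\<lambda>n. d n * z ^ n) sums g z"
      and z: "norm z < R"
  shows "(\<lambda>n. cauchy_product c d n * z ^ n) sums (f z * g z)"
proof -
  have "(\<lambda>n. cauchy_product (\<lambda>j. c j * z ^ j) (\<lambda>j. d j * z ^ j) n)
          sums ((\<Sum>n. c n * z ^ n) * (\<Sum>n. d n * z ^ n))"
    unfolding cauchy_product_def
    by (intro Cauchy_product_sums powser_abs_summable_inside[OF c z] powser_abs_summable_inside[OF d z])
  then show ?thesis
    using c[OF z] d[OF z] by (simp add: cauchy_product_powers sums_iff)
qed

section \<open>Sampling at roots of unity\<close>

lemma sum_cis_multiple_eq_0:
  fixes d :: int and M :: nat
  assumes "d \<noteq> 0" "\<bar>d\<bar> < int M"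
  shows "(\<Sum>k<M. cis (2 * pi * real k * real_of_int d / real M)) = 0"
proof -
  have M: "M > 0" using assms by auto
  define \<omega> where "\<omega> = cis (2 * pi * real_of_int d / real M)"
  have "\<omega> \<noteq> 1"
  proof
    assume "\<omega> = 1"
    then obtain j :: int where "2 * pi * real_of_int d / real M = real_of_int j * 2 * pi"
      by (auto simp: \<omega>_def complex_eq_iff cos_one_2pi_int)
    then have "real_of_int d = real_of_int (j * int M)"
      using M by (simp add: field_simps)
    then have d: "d = j * int M"
      by linarith
    with assms have "\<bar>j\<bar> \<ge> 1"
      by auto
    then have "\<bar>j\<bar> * int M \<ge> int M"
      using mult_right_mono[of 1 "\<bar>j\<bar>" "int M"] by simp
    then show False
      using assms unfolding d abs_mult by simp
  qed
  have "(\<Sum>k<M. cis (2 * pi * real k * real_of_int d / real M)) = (\<Sum>k<M. \<omega> ^ k)"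
    by (intro sum.cong refl) (simp only: \<omega>_def Complex.DeMoivre, simp add: field_simps)
  also have "\<dots> = (\<omega> ^ M - 1) / (\<omega> - 1)"
    using \<open>\<omega> \<noteq> 1\<close> by (subst geometric_sum) auto
  also have "\<omega> ^ M = 1"
    using M by (simp add: \<omega>_def Complex.DeMoivre)
  finally show ?thesis
    by simp
qed

lemma discrete_parseval:
  fixes c :: "nat \<Rightarrow> complex"
  assumes "N < M"
  shows "(\<Sum>k<M. (norm (\<Sum>n\<le>N. c n * cis (2 * pi * real k * real n / real M)))\<^sup>2)
         = real M * (\<Sum>n\<le>N. (norm (c n))\<^sup>2)"
proof -
  let ?e = "\<lambda>k n. cis (2 * pi * real k * real n / real M)"
  have orth: "(\<Sum>k<M. ?e k n * cnj (?e k l)) = (if n = l then of_nat M else 0)"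
    if "n \<le> N" "l \<le> N" for n l
  proof (cases "n = l")
    case True
    then show ?thesis
      by (simp add: cis_cnj cis_mult)
  next
    case False
    have "(\<Sum>k<M. ?e k n * cnj (?e k l))
          = (\<Sum>k<M. cis (2 * pi * real k * real_of_int (int n - int l) / real M))"
      by (intro sum.cong refl) (simp add: cis_cnj cis_mult field_simps)
    also have "\<dots> = 0"
      using False that assms by (intro sum_cis_multiple_eq_0) auto
    finally show ?thesis
      using False by simp
  qed
  have "complex_of_real (\<Sum>k<M. (norm (\<Sum>n\<le>N. c n * ?e k n))\<^sup>2)
      = (\<Sum>k<M. (\<Sum>n\<le>N. c n * ?e k n) * cnj (\<Sum>l\<le>N. c l * ?e k l))"
    by (simp only: of_real_sum complex_norm_square)
  also have "\<dots> = (\<Sum>k<M. \<Sum>n\<le>N. \<Sum>l\<le>N. c n * cnj (c l) * (?e k n * cnj (?e k l)))"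
    by (simp add: sum_product cnj_sum mult_ac)
  also have "\<dots> = (\<Sum>n\<le>N. \<Sum>l\<le>N. c n * cnj (c l) * (\<Sum>k<M. ?e k n * cnj (?e k l)))"
    by (simp add: sum_distrib_left sum.swap[of _ "{..<M}"])
  also have "\<dots> = (\<Sum>n\<le>N. \<Sum>l\<le>N. c n * cnj (c l) * (if n = l then of_nat M else 0))"
    by (intro sum.cong refl) (simp add: orth)
  also have "\<dots> = (\<Sum>n\<le>N. of_nat M * (c n * cnj (c n)))"
    by (simp add: if_distrib mult_ac sum.delta cong: if_cong)
  also have "\<dots> = complex_of_real (real M * (\<Sum>n\<le>N. (norm (c n))\<^sup>2))"
    by (simp only: of_real_mult of_real_sum of_real_of_nat_eq complex_norm_square sum_distrib_left)
  finally show ?thesis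
    using of_real_eq_iff by blast
qed

lemma poly_coeffs_sq_le_of_circle_bound:
  fixes \<alpha> \<beta> :: "nat \<Rightarrow> complex"
  assumes "0 \<le> r" "0 \<le> e" "m \<le> N"
    and le: "\<And>x. norm x = r \<Longrightarrow> norm (\<Sum>n\<le>N. \<beta> n * x ^ n) \<le> norm (\<Sum>n\<le>m. \<alpha> n * x ^ n) + e"
  shows "(\<Sum>n\<le>N. (norm (\<beta> n) * r ^ n)\<^sup>2)
         \<le> (\<Sum>n\<le>m. (norm (\<alpha> n) * r ^ n)\<^sup>2) + 2 * e * (\<Sum>n\<le>m. norm (\<alpha> n) * r ^ n) + e\<^sup>2"
proof -
  define M where "M = Suc N"
  define x where "x k = complex_of_real r * cis (2 * pi * real k / real M)" for k
  define A where "A = (\<Sum>n\<le>m. norm (\<alpha> n) * r ^ n)"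
  have norm_x: "norm (x k) = r" for k
    using \<open>0 \<le> r\<close> by (simp add: x_def norm_mult)
  have parseval: "(\<Sum>k<M. (norm (\<Sum>n\<le>K. c n * x k ^ n))\<^sup>2) = real M * (\<Sum>n\<le>K. (norm (c n) * r ^ n)\<^sup>2)"
    if "K \<le> N" for c K
  proof -
    have "x k ^ n = of_real (r ^ n) * cis (2 * pi * real k * real n / real M)" for k n
      by (simp add: x_def power_mult_distrib Complex.DeMoivre field_simps)
    then have "(\<Sum>n\<le>K. c n * x k ^ n)
               = (\<Sum>n\<le>K. (c n * of_real (r ^ n)) * cis (2 * pi * real k * real n / real M))" for k
      by (simp add: mult.assoc)
    moreover have "K < M"
      using that by (simp add: M_def)
    ultimately show ?thesis
      using discrete_parseval[of K M "\<lambda>n. c n * of_real (r ^ n)"] \<open>0 \<le> r\<close>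
      by (simp add: norm_mult norm_power)
  qed
  have sample: "(norm (\<Sum>n\<le>N. \<beta> n * x k ^ n))\<^sup>2 \<le> (norm (\<Sum>n\<le>m. \<alpha> n * x k ^ n))\<^sup>2 + (2 * e * A + e\<^sup>2)"
    for k
  proof -
    let ?P = "norm (\<Sum>n\<le>m. \<alpha> n * x k ^ n)"
    have "?P \<le> A"
      unfolding A_def using norm_x[of k]
      by (auto intro!: order_trans[OF norm_sum] sum_mono simp: norm_mult norm_power)
    have "(norm (\<Sum>n\<le>N. \<beta> n * x k ^ n))\<^sup>2 \<le> (?P + e)\<^sup>2"
      using le[OF norm_x] by (intro power_mono) auto
    also have "\<dots> = ?P\<^sup>2 + 2 * e * ?P + e\<^sup>2"
      by (simp add: power2_sum)
    also have "2 * e * ?P \<le> 2 * e * A"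
      using \<open>?P \<le> A\<close> \<open>0 \<le> e\<close> by (intro mult_left_mono) auto
    finally show ?thesis
      by simp
  qed
  have "(\<Sum>k<M. (norm (\<Sum>n\<le>N. \<beta> n * x k ^ n))\<^sup>2)
        \<le> (\<Sum>k<M. (norm (\<Sum>n\<le>m. \<alpha> n * x k ^ n))\<^sup>2 + (2 * e * A + e\<^sup>2))"
    by (intro sum_mono sample)
  then have "real M * (\<Sum>n\<le>N. (norm (\<beta> n) * r ^ n)\<^sup>2)
        \<le> real M * ((\<Sum>n\<le>m. (norm (\<alpha> n) * r ^ n)\<^sup>2) + (2 * e * A + e\<^sup>2))"
    using \<open>m \<le> N\<close> by (simp add: parseval sum.distrib algebra_simps)
  then show ?thesis
    by (simp add: M_def A_def)
qed

section \<open>Schur functions contract initial segments\<close>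

lemma norm_suminf_sub_partial_le:
  fixes f :: "nat \<Rightarrow> 'a::banach"
  assumes "summable (\<lambda>n. norm (f n))"
  shows "norm (suminf f - (\<Sum>n<k. f n)) \<le> (\<Sum>n. norm (f n)) - (\<Sum>n<k. norm (f n))"
proof -
  have "summable f"
    using assms by (rule summable_norm_cancel)
  then have "norm (suminf f - (\<Sum>n<k. f n)) = norm (\<Sum>n. f (n + k))"
    by (simp add: suminf_minus_initial_segment)
  also have "\<dots> \<le> (\<Sum>n. norm (f (n + k)))"
    using assms by (intro summable_norm summable_ignore_initial_segment)
  also have "\<dots> = (\<Sum>n. norm (f n)) - (\<Sum>n<k. norm (f n))"
    using assms by (rule suminf_minus_initial_segment)
  finally show ?thesis .
qed

lemma powser_coeffs_sq_le_of_circle_bound: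
  fixes \<alpha> \<beta> :: "nat \<Rightarrow> complex" and g :: "complex \<Rightarrow> complex"
  assumes "0 \<le> r"
    and \<beta>_sums: "\<And>x. norm x = r \<Longrightarrow> (\<lambda>n. \<beta> n * x ^ n) sums g x"
    and \<beta>_summable: "summable (\<lambda>n. norm (\<beta> n) * r ^ n)"
    and le: "\<And>x. norm x = r \<Longrightarrow> norm (g x) \<le> norm (\<Sum>n\<le>m. \<alpha> n * x ^ n)"
  shows "(\<Sum>n\<le>N. (norm (\<beta> n) * r ^ n)\<^sup>2) \<le> (\<Sum>n\<le>m. (norm (\<alpha> n) * r ^ n)\<^sup>2)"
proof -
  define C where "C = (\<Sum>n. norm (\<beta> n) * r ^ n)"
  define e where "e K = C - (\<Sum>n<Suc K. norm (\<beta> n) * r ^ n)" for K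
  define A where "A = (\<Sum>n\<le>m. norm (\<alpha> n) * r ^ n)"
  define P where "P = (\<Sum>n\<le>m. (norm (\<alpha> n) * r ^ n)\<^sup>2)"
  have e_lim: "e \<longlonglongrightarrow> 0"
  proof -
    have "(\<lambda>K. \<Sum>n<Suc K. norm (\<beta> n) * r ^ n) \<longlonglongrightarrow> C"
      unfolding C_def using summable_LIMSEQ[OF \<beta>_summable] by (rule LIMSEQ_Suc)
    then have "(\<lambda>K. C - (\<Sum>n<Suc K. norm (\<beta> n) * r ^ n)) \<longlonglongrightarrow> C - C"
      by (intro tendsto_intros)
    then show ?thesis
      by (simp only: e_def[abs_def] diff_self)
  qed
  have tail: "norm (g x - (\<Sum>n\<le>K. \<beta> n * x ^ n)) \<le> e K" if "norm x = r" for x K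
  proof -
    have "norm (\<beta> n * x ^ n) = norm (\<beta> n) * r ^ n" for n
      using that by (simp add: norm_mult norm_power)
    then show ?thesis
      using norm_suminf_sub_partial_le[of "\<lambda>n. \<beta> n * x ^ n" "Suc K"] \<beta>_sums[OF that] \<beta>_summable
      by (simp add: sums_iff e_def C_def lessThan_Suc_atMost)
  qed
  have e_nonneg: "0 \<le> e K" for K
  proof -
    have "norm (complex_of_real r) = r"
      using \<open>0 \<le> r\<close> by simp
    from tail[OF this, of K] show ?thesis
      by (rule order_trans[OF norm_ge_zero])
  qed
  have partial_le: "norm (\<Sum>n\<le>K. \<beta> n * x ^ n) \<le> norm (\<Sum>n\<le>m. \<alpha> n * x ^ n) + e K"
    if "norm x = r" for x K
    using norm_triangle_sub[of "\<Sum>n\<le>K. \<beta> n * x ^ n" "g x"] tail[OF that, of K] le[OF that]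
      norm_minus_commute[of "g x" "\<Sum>n\<le>K. \<beta> n * x ^ n"]
    by linarith
  have bound: "(\<Sum>n\<le>N. (norm (\<beta> n) * r ^ n)\<^sup>2) \<le> P + 2 * e K * A + (e K)\<^sup>2" if "max N m \<le> K" for K
  proof -
    have "(\<Sum>n\<le>N. (norm (\<beta> n) * r ^ n)\<^sup>2) \<le> (\<Sum>n\<le>K. (norm (\<beta> n) * r ^ n)\<^sup>2)"
      using that by (intro sum_mono2) auto
    also have "\<dots> \<le> P + 2 * e K * A + (e K)\<^sup>2"
      unfolding P_def A_def using \<open>0 \<le> r\<close> e_nonneg that
      by (intro poly_coeffs_sq_le_of_circle_bound partial_le) auto
    finally show ?thesis .
  qed
  have "(\<lambda>K. P + 2 * e K * A + (e K)\<^sup>2) \<longlonglongrightarrow> P + 2 * 0 * A + 0\<^sup>2"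
    by (intro tendsto_intros e_lim)
  moreover have "\<exists>K0. \<forall>K\<ge>K0. (\<Sum>n\<le>N. (norm (\<beta> n) * r ^ n)\<^sup>2) \<le> P + 2 * e K * A + (e K)\<^sup>2"
    using bound by blast
  ultimately have "(\<Sum>n\<le>N. (norm (\<beta> n) * r ^ n)\<^sup>2) \<le> P + 2 * 0 * A + 0\<^sup>2"
    by (rule LIMSEQ_le_const)
  then show ?thesis
    by (simp add: P_def)
qed

lemma schur_cauchy_product_partial_sums_le_radius:
  fixes \<tau> \<alpha> :: "nat \<Rightarrow> complex" and T :: "complex \<Rightarrow> complex"
  assumes T_sums: "\<And>u. norm u < 1 \<Longrightarrow> (\<lambda>j. \<tau> j * u ^ j) sums T u"
      and T_bound: "\<And>u. norm u < 1 \<Longrightarrow> norm (T u) \<le> 1"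
      and r: "0 < r" "r < 1"
  shows "(\<Sum>n\<le>m. (norm (cauchy_product \<tau> \<alpha> n) * r ^ n)\<^sup>2) \<le> (\<Sum>n\<le>m. (norm (\<alpha> n))\<^sup>2)"
proof -
  define \<alpha>' where "\<alpha>' n = (if n \<le> m then \<alpha> n else 0)" for n
  define p where "p x = (\<Sum>n\<le>m. \<alpha> n * x ^ n)" for x :: complex
  define \<beta> where "\<beta> = cauchy_product \<tau> \<alpha>'"
  have p_sums: "(\<lambda>n. \<alpha>' n * x ^ n) sums p x" for x
  proof -
    have "(\<lambda>n. \<alpha>' n * x ^ n) sums (\<Sum>n\<le>m. \<alpha>' n * x ^ n)"
      by (rule sums_finite) (auto simp: \<alpha>'_def)
    then show ?thesis
      by (simp add: p_def \<alpha>'_def)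
  qed
  have \<beta>_summable: "summable (\<lambda>n. norm (\<beta> n) * r ^ n)"
  proof -
    have "norm (complex_of_real r) < 1"
      using r by simp
    then have "summable (\<lambda>n. norm (cauchy_product (\<lambda>j. \<tau> j * of_real r ^ j) (\<lambda>j. \<alpha>' j * of_real r ^ j) n))"
      by (intro summable_norm_cauchy_product powser_abs_summable_inside[OF T_sums]
            powser_abs_summable_inside[where R = 1, OF p_sums])
    then show ?thesis
      using r by (simp add: cauchy_product_powers \<beta>_def norm_mult norm_power)
  qed
  have "(\<Sum>n\<le>m. (norm (\<beta> n) * r ^ n)\<^sup>2) \<le> (\<Sum>n\<le>m. (norm (\<alpha> n) * r ^ n)\<^sup>2)"
  proof (rule powser_coeffs_sq_le_of_circle_bound[where g = "\<lambda>x. T x * p x"])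
    show "(\<lambda>n. \<beta> n * x ^ n) sums (T x * p x)" if "norm x = r" for x
    proof -
      have "norm x < 1"
        using that r by simp
      from powser_mult_sums[OF T_sums p_sums this] show ?thesis
        unfolding \<beta>_def .
    qed
    show "norm (T x * p x) \<le> norm (\<Sum>n\<le>m. \<alpha> n * x ^ n)" if "norm x = r" for x
      using T_bound[of x] that r by (simp add: p_def norm_mult mult_left_le_one_le)
  qed (use r \<beta>_summable in auto)
  also have "\<dots> \<le> (\<Sum>n\<le>m. (norm (\<alpha> n))\<^sup>2)"
    using r by (intro sum_mono power_mono) (auto simp: mult_left_le power_le_one)
  also have "(\<Sum>n\<le>m. (norm (\<beta> n) * r ^ n)\<^sup>2) = (\<Sum>n\<le>m. (norm (cauchy_product \<tau> \<alpha> n) * r ^ n)\<^sup>2)"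
  proof (intro sum.cong refl)
    fix n assume "n \<in> {..m}"
    then have "\<beta> n = cauchy_product \<tau> \<alpha> n"
      unfolding \<beta>_def cauchy_product_def \<alpha>'_def by (intro sum.cong) auto
    then show "(norm (\<beta> n) * r ^ n)\<^sup>2 = (norm (cauchy_product \<tau> \<alpha> n) * r ^ n)\<^sup>2"
      by simp
  qed
  finally show ?thesis .
qed

lemma schur_cauchy_product_partial_sums_le:
  fixes \<tau> \<alpha> :: "nat \<Rightarrow> complex" and T :: "complex \<Rightarrow> complex"
  assumes T_sums: "\<And>u. norm u < 1 \<Longrightarrow> (\<lambda>j. \<tau> j * u ^ j) sums T u"
      and T_bound: "\<And>u. norm u < 1 \<Longrightarrow> norm (T u) \<le> 1"
  shows "(\<Sum>n\<le>m. (norm (cauchy_product \<tau> \<alpha> n))\<^sup>2) \<le> (\<Sum>n\<le>m. (norm (\<alpha> n))\<^sup>2)"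
proof -
  define h where "h r = (\<Sum>n\<le>m. (norm (cauchy_product \<tau> \<alpha> n) * r ^ n)\<^sup>2)" for r :: real
  have "(h \<longlongrightarrow> h 1) (at_left 1)"
    unfolding h_def by (intro tendsto_intros)
  moreover have "eventually (\<lambda>r. r \<in> {0<..<1}) (at_left (1::real))"
    by (rule eventually_at_left_real) simp
  then have "eventually (\<lambda>r. h r \<le> (\<Sum>n\<le>m. (norm (\<alpha> n))\<^sup>2)) (at_left 1)"
    by (rule eventually_mono)
      (auto simp: h_def intro!: schur_cauchy_product_partial_sums_le_radius[OF T_sums T_bound])
  ultimately have "h 1 \<le> (\<Sum>n\<le>m. (norm (\<alpha> n))\<^sup>2)"
    by (intro tendsto_le[OF trivial_limit_at_left_real tendsto_const])
  then show ?thesis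
    by (simp add: h_def)
qed

section \<open>Abel summation\<close>

lemma weighted_sum_le_of_partial_sums_le:
  fixes w u v :: "nat \<Rightarrow> real"
  assumes w_decr: "\<And>n. w (Suc n) \<le> w n" and w_nonneg: "\<And>n. 0 \<le> w n"
      and partial: "\<And>m. (\<Sum>n\<le>m. u n) \<le> (\<Sum>n\<le>m. v n)"
  shows "(\<Sum>n\<le>N. w n * u n) \<le> (\<Sum>n\<le>N. w n * v n)"
proof -
  define D where "D m = (\<Sum>n\<le>m. v n - u n)" for m
  have D_nonneg: "0 \<le> D m" for m
    using partial[of m] by (simp add: D_def sum_subtractf)
  have abel: "(\<Sum>n\<le>N. w n * (v n - u n)) = (\<Sum>m<N. (w m - w (Suc m)) * D m) + w N * D N" for N
  proof (induction N)
    case 0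
    then show ?case
      by (simp add: D_def)
  next
    case (Suc N)
    then show ?case
      by (simp add: D_def algebra_simps)
  qed
  have "0 \<le> (\<Sum>m<N. (w m - w (Suc m)) * D m) + w N * D N"
    using w_decr w_nonneg D_nonneg by (intro add_nonneg_nonneg sum_nonneg mult_nonneg_nonneg) auto
  then show ?thesis
    unfolding abel[symmetric] by (simp add: algebra_simps sum_subtractf)
qed

lemma weighted_suminf_le_of_partial_sums_le:
  fixes w u v :: "nat \<Rightarrow> real"
  assumes w_decr: "\<And>n. w (Suc n) \<le> w n" and w_nonneg: "\<And>n. 0 \<le> w n"
      and partial: "\<And>m. (\<Sum>n\<le>m. u n) \<le> (\<Sum>n\<le>m. v n)"
      and u_nonneg: "\<And>n. 0 \<le> u n" and v_nonneg: "\<And>n. 0 \<le> v n"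
      and v_summable: "summable (\<lambda>n. w n * v n)"
  shows "summable (\<lambda>n. w n * u n)" and "(\<Sum>n. w n * u n) \<le> (\<Sum>n. w n * v n)"
proof -
  have le: "(\<Sum>n\<le>N. w n * u n) \<le> (\<Sum>n. w n * v n)" for N
  proof -
    have "(\<Sum>n\<le>N. w n * u n) \<le> (\<Sum>n\<le>N. w n * v n)"
      using w_decr w_nonneg partial by (rule weighted_sum_le_of_partial_sums_le)
    also have "\<dots> \<le> (\<Sum>n. w n * v n)"
      using v_summable w_nonneg v_nonneg by (intro sum_le_suminf) auto
    finally show ?thesis .
  qed
  show "summable (\<lambda>n. w n * u n)"
    using w_nonneg u_nonneg le by (intro bounded_imp_summable) auto
  then show "(\<Sum>n. w n * u n) \<le> (\<Sum>n. w n * v n)"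
  proof (rule suminf_le_const)
    fix N
    show "(\<Sum>n<N. w n * u n) \<le> (\<Sum>n. w n * v n)"
    proof (cases N)
      case 0
      then show ?thesis
        using w_nonneg v_nonneg by (simp add: suminf_nonneg[OF v_summable])
    next
      case (Suc N')
      then show ?thesis
        using le[of N'] by (simp add: lessThan_Suc_atMost)
    qed
  qed
qed

section \<open>Contractive multipliers of H_{2,q}\<close>

lemma qint_mult_one_minus: "q \<noteq> 1 \<Longrightarrow> 0 < k \<Longrightarrow> qint q k * (1 - q) = 1 - q ^ k"
  by (simp add: qint_def sum_gp_strict)

lemma qfact_mult_power:
  assumes "q \<noteq> 1"
  shows "qfact q n * (1 - q) ^ n = (\<Prod>j\<in>{1..n}. 1 - q ^ j)"
proof -
  have "qfact q n * (1 - q) ^ n = (\<Prod>j\<in>{1..n}. qint q j * (1 - q))"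
    by (simp add: qfact_def prod.distrib)
  also have "\<dots> = (\<Prod>j\<in>{1..n}. 1 - q ^ j)"
    using assms by (intro prod.cong refl) (simp add: qint_mult_one_minus)
  finally show ?thesis .
qed

lemma qfact_weighted_contraction:
  fixes a b :: "nat \<Rightarrow> complex"
  assumes q: "0 \<le> q" "q < 1"
    and a_summable: "summable (\<lambda>n. qfact q n * (norm (a n))\<^sup>2)"
    and partial: "\<And>m. (\<Sum>n\<le>m. (norm (b n))\<^sup>2 / (1 - q) ^ n) \<le> (\<Sum>n\<le>m. (norm (a n))\<^sup>2 / (1 - q) ^ n)"
  shows "summable (\<lambda>n. qfact q n * (norm (b n))\<^sup>2)" and "H2q_normsq q b \<le> H2q_normsq q a"
proof -
  define w where "w n = (\<Prod>j\<in>{1..n}. 1 - q ^ j)" for n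
  have w_nonneg: "0 \<le> w n" for n
    using q by (auto simp: w_def power_le_one intro!: prod_nonneg)
  have w_decr: "w (Suc n) \<le> w n" for n
  proof -
    have "w (Suc n) = w n * (1 - q ^ Suc n)"
      by (simp add: w_def)
    also have "\<dots> \<le> w n"
      using w_nonneg[of n] q by (simp add: mult_left_le)
    finally show ?thesis .
  qed
  have weight: "qfact q n * (norm (c n))\<^sup>2 = w n * ((norm (c n))\<^sup>2 / (1 - q) ^ n)"
    for c :: "nat \<Rightarrow> complex" and n
    using q qfact_mult_power[of q n] by (simp add: w_def field_simps)
  show "summable (\<lambda>n. qfact q n * (norm (b n))\<^sup>2)" "H2q_normsq q b \<le> H2q_normsq q a"
    using weighted_suminf_le_of_partial_sums_le[of w "\<lambda>n. (norm (b n))\<^sup>2 / (1 - q) ^ n"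
        "\<lambda>n. (norm (a n))\<^sup>2 / (1 - q) ^ n", OF w_decr w_nonneg partial] a_summable q
    unfolding H2q_normsq_def weight by auto
qed

lemma contractive_multiplier_schur:
  assumes q: "0 < q" "q < 1" and S: "schur_function S"
  shows "contractive_multiplier q (\<lambda>z. S (z * complex_of_real (sqrt (1 - q))))"
proof -
  define t where "t = sqrt (1 - q)"
  define \<tau> where "\<tau> j = (deriv ^^ j) S 0 / fact j" for j
  have t: "0 < t" "t\<^sup>2 = 1 - q"
    using q by (auto simp: t_def)
  have S_sums: "(\<lambda>j. \<tau> j * u ^ j) sums S u" if "norm u < 1" for u
    using holomorphic_power_series[of S 0 1 u] S that by (simp add: \<tau>_def schur_function_def)
  have S_bound: "norm (S u) \<le> 1" if "norm u < 1" for u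
    using S that by (simp add: schur_function_def)
  have St_sums: "(\<lambda>j. (\<tau> j * of_real t ^ j) * z ^ j) sums S (z * of_real t)" if "norm z < 1 / t" for z
  proof -
    have "norm (z * of_real t) < 1"
      using that t by (simp add: norm_mult field_simps)
    from S_sums[OF this] show ?thesis
      by (simp add: power_mult_distrib mult_ac)
  qed
  have rescale: "(norm (c * of_real t ^ n))\<^sup>2 / (1 - q) ^ n = (norm c)\<^sup>2" for c :: complex and n
  proof -
    have "(t ^ n)\<^sup>2 = (1 - q) ^ n"
      by (metis t(2) power_mult mult.commute)
    then show ?thesis
      using t q by (simp add: norm_mult norm_power power_mult_distrib)
  qed
  show ?thesis
    unfolding contractive_multiplier_def t_def[symmetric]
  proof (intro allI impI)
    fix f a
    assume "H2q_coeffs q f a"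
    then have a_summable: "summable (\<lambda>n. qfact q n * (norm (a n))\<^sup>2)"
      and f_sums: "\<And>z. norm z < 1 / t \<Longrightarrow> (\<lambda>n. a n * z ^ n) sums f z"
      by (auto simp: H2q_coeffs_def qdisk_def t_def)
    define \<alpha> where "\<alpha> n = a n / of_real t ^ n" for n
    define b where "b = cauchy_product (\<lambda>j. \<tau> j * of_real t ^ j) a"
    have a_eq: "a n = \<alpha> n * of_real t ^ n" for n
      using t by (simp add: \<alpha>_def)
    have b_eq: "b n = cauchy_product \<tau> \<alpha> n * of_real t ^ n" for n
      unfolding b_def a_eq[abs_def] by (rule cauchy_product_powers)
    have b_sums: "(\<lambda>n. b n * z ^ n) sums (S (z * of_real t) * f z)" if "z \<in> qdisk q" for z
      using powser_mult_sums[OF St_sums f_sums] that by (simp add: b_def qdisk_def t_def)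
    have partial: "(\<Sum>n\<le>m. (norm (b n))\<^sup>2 / (1 - q) ^ n) \<le> (\<Sum>n\<le>m. (norm (a n))\<^sup>2 / (1 - q) ^ n)" for m
      using schur_cauchy_product_partial_sums_le[OF S_sums S_bound, where \<alpha> = \<alpha> and m = m]
      by (simp add: b_eq a_eq rescale)
    note contraction = qfact_weighted_contraction[OF less_imp_le[OF q(1)] q(2) a_summable partial]
    show "\<exists>b. H2q_coeffs q (\<lambda>z. S (z * of_real t) * f z) b \<and> H2q_normsq q b \<le> H2q_normsq q a"
    proof (intro exI conjI)
      show "H2q_coeffs q (\<lambda>z. S (z * of_real t) * f z) b"
        using contraction(1) b_sums by (simp add: H2q_coeffs_def)
      show "H2q_normsq q b \<le> H2q_normsq q a"
        by (fact contraction(2))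
    qed
  qed
qed

lemma schur_function_scale:
  assumes "schur_function S" "0 \<le> \<rho>" "\<rho> \<le> 1"
  shows "schur_function (\<lambda>z. S (z * complex_of_real \<rho>))"
proof -
  have maps: "z * of_real \<rho> \<in> ball 0 1" if "z \<in> ball 0 1" for z :: complex
    using that assms(2,3) mult_right_le_one_le[of "norm z" \<rho>] by (simp add: norm_mult)
  have "(S \<circ> (\<lambda>z. z * of_real \<rho>)) holomorphic_on ball 0 1"
    using assms(1) maps
    by (intro holomorphic_on_compose_gen[where t = "ball 0 1"] holomorphic_intros)
      (auto simp: schur_function_def)
  then show ?thesis
    using assms(1) maps by (auto simp: schur_function_def o_def)
qed

theorem lemma8p5:
  fixes q :: real and S :: "complex \<Rightarrow> complex" and k :: nat
  assumes "0 < q" "q < 1" "schur_function S"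
  shows "contractive_multiplier q
           (\<lambda>z. S (z * complex_of_real (sqrt (1 - q) * q powr (real k / 2))))"
proof -
  define \<rho> where "\<rho> = q powr (real k / 2)"
  have "0 \<le> \<rho>" "\<rho> \<le> 1"
    using assms(1,2) by (auto simp: \<rho>_def powr_le1)
  with assms(3) have "schur_function (\<lambda>z. S (z * complex_of_real \<rho>))"
    by (rule schur_function_scale)
  then have "contractive_multiplier q (\<lambda>z. S (z * complex_of_real (sqrt (1 - q)) * complex_of_real \<rho>))"
    using assms(1,2) by (rule contractive_multiplier_schur[rotated 2])
  then show ?thesis
    by (simp add: \<rho>_def mult.assoc)
qed

end
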